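(* Consider the power flow operator $F:\mathbb{R}^k\to\mathbb{R}^k$ and the map $x\mapsto V(x)$ described in the context. Let $\mathcal{D}\subset\mathbb{R}^k$ be a compact convex set such that there exists a matrix $W\in\mathbb{R}^{k\times k}$ satisfying $$\frac{W J_F(x)+(W J_F(x))^T}{2}\succ 0\quad\text{for all } x\in\mathcal{D},$$ where $J_F(x)$ denotes the Jacobian of $F$ with respect to $x$. Define $F_W(x)=W F(x)$. Then $F_W$ is strictly monotone over $\mathcal{D}$, i.e. $\langle F_W(x)-F_W(y),x-y\rangle>0$ for all $x,y\in\mathcal{D}$, $x\neq y$. Let $x^*$ be the unique solution of the variational inequality: find $x\in\mathcal{D}$ such that $\langle F_W(x),y-x\rangle\ge 0$ for all $y\in\mathcal{D}$. Then, if $F(x^* )=0$, the voltage vector $V(x^* )$ is the unique solution of the power flow equations $F(x)=0$ with $x\in\mathcal{D}$; otherwise, there is no $x\in\mathcal{D}$ with $F(x)=0$.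
   Context: A power network has buses $0,1,\dots,n$ and a complex symmetric (not necessarily Hermitian) admittance matrix $Y\in\mathbb{C}^{(n+1)\times(n+1)}$; write $G=\mathrm{Re}(Y)$, $B=\mathrm{Im}(Y)$, $\mathbf{j}=\sqrt{-1}$. Bus $0$ is the slack bus with a fixed voltage phasor $V_0=e^{\rho_0+\mathbf{j}\theta_0}$. The remaining buses $\{1,\dots,n\}$ are partitioned into a set $\mathrm{pv}$ of PV buses (each $i\in\mathrm{pv}$ has a fixed voltage magnitude $v_i>0$) and a set $\mathrm{pq}$ of PQ buses. For $i\in\{1,\dots,n\}$ real active power injections $p_i$ are given, and for $i\in\mathrm{pq}$ real reactive injections $q_i$ are given. The unknowns are $x=(\theta_1,\dots,\theta_n,(\rho_i)_{i\in\mathrm{pq}})\in\mathbb{R}^k$, $k=n+|\mathrm{pq}|$; given $x$, set $\rho_i=\log v_i$ for $i\in\mathrm{pv}$, and define voltage phasors $V_i=e^{\rho_i+\mathbf{j}\theta_i}$, $i=0,\dots,n$, forming $V(x)$. Write $\theta_{ij}=\theta_i-\theta_j$. The power flow operator $F$ has components, for $1\le i\le n$, $$F_i(x)=\sum_{j=0}^n B_{ij}e^{\rho_i+\rho_j}\sin\theta_{ij}+\sum_{j=0}^n G_{ij}e^{\rho_i+\rho_j}\cos\theta_{ij}-p_i,$$ and, for each $i\in\mathrm{pq}$, a component $$F_{n+i}(x)=\sum_{j=0}^n G_{ij}e^{\rho_i+\rho_j}\sin\theta_{ij}-\sum_{j=0}^n B_{ij}e^{\rho_i+\rho_j}\cos\theta_{ij}-q_i.$$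 The power flow equations are $F(x)=0$. For a symmetric matrix $M$, $M\succ 0$ means positive definite; $\langle\cdot,\cdot\rangle$ is the Euclidean inner product. *)

theory Defs
  imports "HOL-Analysis.Analysis"
begin

text \<open>Unknowns are indexed by labels: Inl i stands for theta_i (1 <= i <= n),
  Inr i stands for rho_i (i in pq).  The coordinate type 'k of the unknown vector
  x in R^k is linked to the labels by a bijection pos.\<close>

definition var_labels :: "nat \<Rightarrow> nat set \<Rightarrow> (nat + nat) set" where
  "var_labels n pq = Inl ` {1..n} \<union> Inr ` pq"

definition theta_of :: "real \<Rightarrow> (nat + nat \<Rightarrow> 'k) \<Rightarrow> real^'k \<Rightarrow> nat \<Rightarrow> real" where
  "theta_of \<theta>0 pos x i = (if i = 0 then \<theta>0 else x $ pos (Inl i))"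

definition rho_of :: "nat set \<Rightarrow> (nat \<Rightarrow> real) \<Rightarrow> real \<Rightarrow> (nat + nat \<Rightarrow> 'k) \<Rightarrow> real^'k \<Rightarrow> nat \<Rightarrow> real" where
  "rho_of pq v \<rho>0 pos x i =
     (if i = 0 then \<rho>0 else if i \<in> pq then x $ pos (Inr i) else ln (v i))"

definition voltage :: "nat set \<Rightarrow> (nat \<Rightarrow> real) \<Rightarrow> real \<Rightarrow> real \<Rightarrow> (nat + nat \<Rightarrow> 'k) \<Rightarrow> real^'k \<Rightarrow> nat \<Rightarrow> complex" where
  "voltage pq v \<rho>0 \<theta>0 pos x i =
     exp (complex_of_real (rho_of pq v \<rho>0 pos x i) + \<i> * complex_of_real (theta_of \<theta>0 pos x i))"

definition act_inj :: "nat \<Rightarrow> (nat \<Rightarrow> nat \<Rightarrow> complex) \<Rightarrow> (nat \<Rightarrow> real) \<Rightarrow> (nat \<Rightarrow> real) \<Rightarrow> nat \<Rightarrow> real" where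
  "act_inj n Y \<rho> \<theta> i = (\<Sum>j=0..n. Im (Y i j) * exp (\<rho> i + \<rho> j) * sin (\<theta> i - \<theta> j))
                        + (\<Sum>j=0..n. Re (Y i j) * exp (\<rho> i + \<rho> j) * cos (\<theta> i - \<theta> j))"

definition react_inj :: "nat \<Rightarrow> (nat \<Rightarrow> nat \<Rightarrow> complex) \<Rightarrow> (nat \<Rightarrow> real) \<Rightarrow> (nat \<Rightarrow> real) \<Rightarrow> nat \<Rightarrow> real" where
  "react_inj n Y \<rho> \<theta> i = (\<Sum>j=0..n. Re (Y i j) * exp (\<rho> i + \<rho> j) * sin (\<theta> i - \<theta> j))
                        - (\<Sum>j=0..n. Im (Y i j) * exp (\<rho> i + \<rho> j) * cos (\<theta> i - \<theta> j))"

text \<open>The power flow operator F : R^k -> R^k.  The coordinate labelled Inl i is F_i,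
  the coordinate labelled Inr i is F_{n+i}.\<close>
definition power_flow :: "nat \<Rightarrow> (nat \<Rightarrow> nat \<Rightarrow> complex) \<Rightarrow> nat set \<Rightarrow> (nat \<Rightarrow> real) \<Rightarrow>
    (nat \<Rightarrow> real) \<Rightarrow> (nat \<Rightarrow> real) \<Rightarrow> real \<Rightarrow> real \<Rightarrow> (nat + nat \<Rightarrow> 'k) \<Rightarrow> real^'k \<Rightarrow> real^'k" where
  "power_flow n Y pq v p q \<rho>0 \<theta>0 pos x =
     (\<chi> c. (let \<rho> = rho_of pq v \<rho>0 pos x; \<theta> = theta_of \<theta>0 pos x in
        case inv_into (var_labels n pq) pos c of
          Inl i \<Rightarrow> act_inj n Y \<rho> \<theta> i - p i
        | Inr i \<Rightarrow> react_inj n Y \<rho> \<theta> i - q i))"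

definition jacobian :: "(real^'k \<Rightarrow> real^'k) \<Rightarrow> real^'k \<Rightarrow> real^'k^'k" where
  "jacobian F x = matrix (frechet_derivative F (at x))"

definition pos_def :: "real^'k^'k \<Rightarrow> bool" where
  "pos_def M \<longleftrightarrow> transpose M = M \<and> (\<forall>h. h \<noteq> 0 \<longrightarrow> h \<bullet> (M *v h) > 0)"

definition solves_VI :: "(real^'k \<Rightarrow> real^'k) \<Rightarrow> (real^'k) set \<Rightarrow> real^'k \<Rightarrow> bool" where
  "solves_VI G D x \<longleftrightarrow> x \<in> D \<and> (\<forall>y\<in>D. G x \<bullet> (y - x) \<ge> 0)"

end

theory Submission
  imports Defs
begin

text \<open>By the mean value theorem along the segment from y to x, the quantity
  (F_W x - F_W y) \<bullet> (x - y) equals h \<bullet> (W J_F(z) h) for h = x - y and some z on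
  the segment; positive definiteness of the symmetric part of W J_F(z) makes it
  positive, so F_W is strictly monotone on the convex set D.  The variational
  inequality has a solution by Brouwer's theorem applied to x \<mapsto> proj_D (x - F_W x),
  and at most one by strict monotonicity.  Every zero of F in D solves the
  variational inequality, so it must be that unique solution.\<close>

lemma differentiable_vec_componentwise:
  fixes f :: "real^'m \<Rightarrow> real^'n"
  assumes "\<And>c. (\<lambda>x. f x $ c) differentiable (at a)"
  shows "f differentiable (at a)"
  using differentiable_componentwise_within[of f a UNIV] assms
  by (auto simp: Basis_vec_def cart_eq_inner_axis[symmetric])

lemma differentiable_exp_comp:
  "f differentiable (at a) \<Longrightarrow> (\<lambda>x. exp (f x :: real)) differentiable (at a)"
  by (metis differentiable_def has_derivative_exp)

lemma differentiable_sin_comp: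
  "f differentiable (at a) \<Longrightarrow> (\<lambda>x. sin (f x :: real)) differentiable (at a)"
  by (metis differentiable_def has_derivative_sin)

lemma differentiable_cos_comp:
  "f differentiable (at a) \<Longrightarrow> (\<lambda>x. cos (f x :: real)) differentiable (at a)"
  by (metis differentiable_def has_derivative_cos)

lemma differentiable_vec_nth: "(\<lambda>x::real^'k. x $ c) differentiable (at a)"
  by (simp add: bounded_linear_imp_differentiable bounded_linear_vec_nth)

lemma rho_of_differentiable: "(\<lambda>x. rho_of pq v \<rho>0 pos x i) differentiable (at a)"
  unfolding rho_of_def by (cases "i = 0"; cases "i \<in> pq") (simp_all add: differentiable_vec_nth)

lemma theta_of_differentiable: "(\<lambda>x. theta_of \<theta>0 pos x i) differentiable (at a)"
  unfolding theta_of_def by (cases "i = 0") (simp_all add: differentiable_vec_nth)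

lemmas injection_differentiable_intros =
  differentiable_add differentiable_diff differentiable_sum differentiable_mult
  differentiable_exp_comp differentiable_sin_comp differentiable_cos_comp
  rho_of_differentiable theta_of_differentiable differentiable_const finite_atLeastAtMost

lemma act_inj_differentiable:
  "(\<lambda>x. act_inj n Y (rho_of pq v \<rho>0 pos x) (theta_of \<theta>0 pos x) i) differentiable (at a)"
  unfolding act_inj_def by (intro injection_differentiable_intros ballI)

lemma react_inj_differentiable:
  "(\<lambda>x. react_inj n Y (rho_of pq v \<rho>0 pos x) (theta_of \<theta>0 pos x) i) differentiable (at a)"
  unfolding react_inj_def by (intro injection_differentiable_intros ballI)

lemma power_flow_differentiable:
  "power_flow n Y pq v p q \<rho>0 \<theta>0 pos differentiable (at a)"
proof (rule differentiable_vec_componentwise)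
  fix c
  show "(\<lambda>x. power_flow n Y pq v p q \<rho>0 \<theta>0 pos x $ c) differentiable (at a)"
    by (cases "inv_into (var_labels n pq) pos c")
       (simp_all add: power_flow_def Let_def act_inj_differentiable react_inj_differentiable)
qed

lemma inner_symmetric_part_mult:
  "(h::real^'k) \<bullet> (((1/2) *\<^sub>R (A + transpose A)) *v h) = h \<bullet> (A *v h)"
proof -
  have "h \<bullet> (transpose A *v h) = h \<bullet> (A *v h)"
    by (simp add: dot_lmul_matrix[symmetric] inner_commute)
  then show ?thesis
    by (simp add: scaleR_matrix_vector_assoc[symmetric] matrix_vector_mult_add_rdistrib inner_add_right)
qed

lemma jacobian_works:
  assumes "G differentiable (at x)"
  shows "(G has_derivative (\<lambda>h. jacobian G x *v h)) (at x)"
proof -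
  have "(G has_derivative frechet_derivative G (at x)) (at x)"
    using assms frechet_derivative_works by blast
  moreover from this have "linear (frechet_derivative G (at x))"
    using has_derivative_linear by blast
  ultimately show ?thesis
    unfolding jacobian_def by (simp add: matrix_works)
qed

lemma jacobian_matrix_vector_mult:
  assumes "G differentiable (at x)"
  shows "jacobian (\<lambda>x. W *v G x) x = W ** jacobian G x"
proof -
  have "((\<lambda>x. W *v G x) has_derivative (\<lambda>h. (W ** jacobian G x) *v h)) (at x)"
    using bounded_linear.has_derivative[OF matrix_vector_mul_bounded_linear jacobian_works[OF assms]]
    by (simp add: matrix_vector_mul_assoc)
  then show ?thesis
    unfolding jacobian_def by (metis frechet_derivative_at matrix_of_matrix_vector_mul)
qed

lemma strictly_monotone_if_jacobian_pos_def:
  fixes G :: "real^'k \<Rightarrow> real^'k"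
  assumes diff: "\<And>z. z \<in> D \<Longrightarrow> G differentiable (at z)" and "convex D"
    and pd: "\<And>z. z \<in> D \<Longrightarrow> pos_def ((1/2) *\<^sub>R (jacobian G z + transpose (jacobian G z)))"
    and "x \<in> D" "y \<in> D" "x \<noteq> y"
  shows "(G x - G y) \<bullet> (x - y) > 0"
proof -
  define h where "h = x - y"
  define g where "g t = h \<bullet> G (y + t *\<^sub>R h)" for t
  define g' where "g' t = h \<bullet> (jacobian G (y + t *\<^sub>R h) *v h)" for t
  have segment_in_D: "y + t *\<^sub>R h \<in> D" if "0 \<le> t" "t \<le> 1" for t
  proof -
    have "(1 - t) *\<^sub>R y + t *\<^sub>R x \<in> D"
      using \<open>convex D\<close> \<open>x \<in> D\<close> \<open>y \<in> D\<close> that by (simp add: convex_alt)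
    then show ?thesis by (simp add: h_def algebra_simps)
  qed
  have "DERIV g t :> g' t" if "0 \<le> t" "t \<le> 1" for t
  proof -
    have line: "((\<lambda>t. y + t *\<^sub>R h) has_derivative (\<lambda>s. s *\<^sub>R h)) (at t)"
      by (auto intro!: derivative_eq_intros)
    have "((\<lambda>t. G (y + t *\<^sub>R h)) has_derivative (\<lambda>s. jacobian G (y + t *\<^sub>R h) *v (s *\<^sub>R h))) (at t)"
      using has_derivative_compose[OF line jacobian_works[OF diff[OF segment_in_D[OF that]]]]
      by (simp add: o_def)
    from has_derivative_inner_right[OF this, of h]
    have "(g has_derivative (\<lambda>s. s * g' t)) (at t)"
      by (simp add: g_def[abs_def] g'_def matrix_vector_mult_scaleR)
    then show ?thesis
      by (simp add: has_field_derivative_def mult_commute_abs)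
  qed
  then obtain z where z: "0 < z" "z < 1" "g 1 - g 0 = g' z"
    using MVT2[of 0 1 g g'] by auto
  have "h \<noteq> 0" using \<open>x \<noteq> y\<close> by (simp add: h_def)
  with pd[OF segment_in_D] z have "g' z > 0"
    unfolding pos_def_def g'_def inner_symmetric_part_mult by simp
  moreover have "g 1 - g 0 = (G x - G y) \<bullet> (x - y)"
    by (simp add: g_def h_def inner_diff_right inner_commute)
  ultimately show ?thesis using z by simp
qed

lemma solves_VI_exists:
  fixes G :: "real^'k \<Rightarrow> real^'k"
  assumes "continuous_on D G" "compact D" "convex D" "D \<noteq> {}"
  shows "\<exists>x. solves_VI G D x"
proof -
  have "closed D" using \<open>compact D\<close> compact_imp_closed by blast
  define f where "f x = closest_point D (x - G x)" for x
  have "continuous_on D f" unfolding f_def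
    by (intro continuous_on_compose2[OF continuous_on_closest_point] continuous_intros assms \<open>closed D\<close>) auto
  moreover have "f \<in> D \<rightarrow> D"
    unfolding f_def using closest_point_in_set[OF \<open>closed D\<close> \<open>D \<noteq> {}\<close>] by auto
  ultimately obtain x where "x \<in> D" "f x = x"
    using brouwer[OF \<open>compact D\<close> \<open>convex D\<close> \<open>D \<noteq> {}\<close>] by metis
  moreover have "G x \<bullet> (y - x) \<ge> 0" if "y \<in> D" for y
    using closest_point_dot[OF \<open>convex D\<close> \<open>closed D\<close> that, of "x - G x"] \<open>f x = x\<close>
    unfolding f_def by simp
  ultimately show ?thesis unfolding solves_VI_def by blast
qed

lemma solves_VI_unique:
  assumes mono: "\<And>x y. x \<in> D \<Longrightarrow> y \<in> D \<Longrightarrow> x \<noteq> y \<Longrightarrow> (G x - G y) \<bullet> (x - y) > 0"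
    and "solves_VI G D x1" "solves_VI G D x2"
  shows "x1 = x2"
proof (rule ccontr)
  assume "x1 \<noteq> x2"
  have "(G x1 - G x2) \<bullet> (x1 - x2) = - (G x1 \<bullet> (x2 - x1)) - G x2 \<bullet> (x1 - x2)"
    by (simp add: inner_diff_left inner_diff_right algebra_simps)
  with assms(2,3) mono[of x1 x2] \<open>x1 \<noteq> x2\<close> show False
    unfolding solves_VI_def by force
qed

lemma solves_VI_if_zero:
  "x \<in> D \<Longrightarrow> F x = 0 \<Longrightarrow> solves_VI (\<lambda>x. W *v F x) D x"
  by (simp add: solves_VI_def)

theorem theorem3:
  fixes n :: nat and Y :: "nat \<Rightarrow> nat \<Rightarrow> complex"
    and pv pq :: "nat set" and v p q :: "nat \<Rightarrow> real" and \<rho>0 \<theta>0 :: real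
    and pos :: "nat + nat \<Rightarrow> 'k::finite"
    and D :: "(real^'k) set" and W :: "real^'k^'k"
  defines "F \<equiv> power_flow n Y pq v p q \<rho>0 \<theta>0 pos"
      and "V \<equiv> voltage pq v \<rho>0 \<theta>0 pos"
      and "FW \<equiv> (\<lambda>x. W *v power_flow n Y pq v p q \<rho>0 \<theta>0 pos x)"
  assumes Ysym: "\<forall>i\<le>n. \<forall>j\<le>n. Y i j = Y j i"
      and partition: "pv \<union> pq = {1..n}" "pv \<inter> pq = {}"
      and vpos: "\<forall>i\<in>pv. v i > 0"
      and pos_bij: "bij_betw pos (var_labels n pq) UNIV"
      and D_compact: "compact D" and D_convex: "convex D" and D_ne: "D \<noteq> {}"
      and W_pd: "\<forall>x\<in>D. pos_def ((1/2) *\<^sub>R (W ** jacobian F x + transpose (W ** jacobian F x)))"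
  shows "(\<forall>x\<in>D. \<forall>y\<in>D. x \<noteq> y \<longrightarrow> (FW x - FW y) \<bullet> (x - y) > 0)
       \<and> (\<exists>!x. solves_VI FW D x)
       \<and> (\<forall>xs. solves_VI FW D xs \<longrightarrow>
            (F xs = 0 \<longrightarrow> (\<forall>x\<in>D. F x = 0 \<longleftrightarrow> x = xs)
                          \<and> (\<forall>x\<in>D. F x = 0 \<longrightarrow> (\<forall>i\<le>n. V x i = V xs i)))
          \<and> (F xs \<noteq> 0 \<longrightarrow> \<not> (\<exists>x\<in>D. F x = 0)))"
proof -
  have FW_eq: "FW = (\<lambda>x. W *v F x)" unfolding FW_def F_def ..
  have F_diff: "F differentiable (at a)" for a
    unfolding F_def by (rule power_flow_differentiable)
  then have FW_diff: "FW differentiable (at a)" for a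
    unfolding FW_eq by (simp add: bounded_linear_imp_differentiable differentiable_chain_at[unfolded o_def]
        matrix_vector_mul_bounded_linear)
  have mono: "\<forall>x\<in>D. \<forall>y\<in>D. x \<noteq> y \<longrightarrow> (FW x - FW y) \<bullet> (x - y) > 0"
    using strictly_monotone_if_jacobian_pos_def[OF FW_diff D_convex] W_pd
    unfolding FW_eq by (simp add: jacobian_matrix_vector_mult[OF F_diff])
  have "continuous_on D FW"
    using FW_diff by (simp add: differentiable_imp_continuous_on differentiable_at_imp_differentiable_on)
  then have ex1: "\<exists>!x. solves_VI FW D x"
    using solves_VI_exists[OF _ D_compact D_convex D_ne] solves_VI_unique[of D FW] mono by blast
  have "x = xs" if "solves_VI FW D xs" "x \<in> D" "F x = 0" for x xs
    using solves_VI_unique[of D FW] mono solves_VI_if_zero[of x D F W] that unfolding FW_eq by blast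
  with mono ex1 show ?thesis
    unfolding solves_VI_def by blast
qed

end
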